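(* Let $A$ and $B$ be NFAs with at most $m$ and at most $n$ states, respectively, such that there is no infinite tower of prefixes between $L(A)$ and $L(B)$. Then every tower of prefixes between $L(A)$ and $L(B)$ has height at most $2^{m+n-1}$. Moreover, for infinitely many pairs $(m,n)$ there exist NFAs with $m$ and $n$ states, with no infinite tower of prefixes between their languages, admitting a tower of prefixes of height at least $2^{m+n-2}$.
   Context: A string $v$ is a prefix of $w$, written $v\le w$, if $w=vu$ for some string $u$. A sequence $(w_i)_{i=1}^r$ of strings is a tower of prefixes between languages $K$ and $L$ if $w_1\in K\cup L$ and for all $i=1,\dots,r-1$: $w_i\le w_{i+1}$, $w_i\in K$ implies $w_{i+1}\in L$, and $w_i\in L$ implies $w_{i+1}\in K$; $r$ is its height. An infinite tower of prefixes is an infinite sequence with the same properties. *)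

theory Defs
  imports Main "HOL-Library.Sublist"
begin

record ('q, 'a) nfa =
  states :: "'q set"
  alphabet :: "'a set"
  init :: "'q set"
  final :: "'q set"
  delta :: "'q \<Rightarrow> 'a \<Rightarrow> 'q set"

definition wf_nfa :: "('q, 'a) nfa \<Rightarrow> bool" where
  "wf_nfa A \<longleftrightarrow> finite (states A) \<and> finite (alphabet A)
     \<and> init A \<subseteq> states A \<and> final A \<subseteq> states A
     \<and> (\<forall>q\<in>states A. \<forall>a\<in>alphabet A. delta A q a \<subseteq> states A)"

fun deltas :: "('q, 'a) nfa \<Rightarrow> 'q \<Rightarrow> 'a list \<Rightarrow> 'q set" where
  "deltas A q [] = {q}"
| "deltas A q (a # w) = (\<Union>p\<in>delta A q a. deltas A p w)"

definition lang :: "('q, 'a) nfa \<Rightarrow> 'a list set" where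
  "lang A = {w. w \<in> lists (alphabet A) \<and> (\<exists>q\<in>init A. deltas A q w \<inter> final A \<noteq> {})}"

definition tower :: "'a list set \<Rightarrow> 'a list set \<Rightarrow> 'a list list \<Rightarrow> bool" where
  "tower K L ws \<longleftrightarrow> ws \<noteq> [] \<and> ws ! 0 \<in> K \<union> L \<and>
     (\<forall>i. Suc i < length ws \<longrightarrow>
        prefix (ws ! i) (ws ! Suc i) \<and>
        (ws ! i \<in> K \<longrightarrow> ws ! Suc i \<in> L) \<and>
        (ws ! i \<in> L \<longrightarrow> ws ! Suc i \<in> K))"

definition infinite_tower :: "'a list set \<Rightarrow> 'a list set \<Rightarrow> (nat \<Rightarrow> 'a list) \<Rightarrow> bool" where
  "infinite_tower K L w \<longleftrightarrow> w 0 \<in> K \<union> L \<and>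
     (\<forall>i. prefix (w i) (w (Suc i)) \<and>
        (w i \<in> K \<longrightarrow> w (Suc i) \<in> L) \<and>
        (w i \<in> L \<longrightarrow> w (Suc i) \<in> K))"

end

theory Submission
  imports Defs
begin

text \<open>Label each word of a tower by the pair of state sets it reaches in \<open>A\<close> and in \<open>B\<close>.
  If two words share a label, the segment between them can be pumped into an infinite tower,
  so the labels along a tower are pairwise distinct. The languages are then disjoint, so in every
  label exactly one component contains a final state, and an involution toggling one final state
  shows that at most half of the \<open>2 ^ (m + n)\<close> pairs of subsets are of this kind.

  For the lower bound, \<open>counter_nfa m\<close> is a binary down-counter driven by the ruler word of
  length \<open>2 ^ m - 1\<close>, and \<open>last_zero_nfa m\<close> recognises the words ending in \<open>0\<close>; the prefixes
  of the ruler word alternate between the two languages. A tower step always changes the state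
  set of the counter, and the counter never increases, so no tower is infinite.\<close>

definition deltas_set :: "('q, 'a) nfa \<Rightarrow> 'q set \<Rightarrow> 'a list \<Rightarrow> 'q set" where
  "deltas_set A X w = (\<Union>q\<in>X. deltas A q w)"

lemma deltas_append: "deltas A q (u @ v) = (\<Union>p\<in>deltas A q u. deltas A p v)"
  by (induction u arbitrary: q) auto

lemma deltas_set_Nil [simp]: "deltas_set A X [] = X"
  by (simp add: deltas_set_def)

lemma deltas_set_Cons: "deltas_set A X (a # w) = deltas_set A (\<Union>q\<in>X. delta A q a) w"
  by (auto simp: deltas_set_def)

lemma deltas_set_append: "deltas_set A X (u @ v) = deltas_set A (deltas_set A X u) v"
  by (auto simp: deltas_set_def deltas_append)

lemma lang_iff_deltas_set:
  "w \<in> lang A \<longleftrightarrow> w \<in> lists (alphabet A) \<and> deltas_set A (init A) w \<inter> final A \<noteq> {}"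
  by (auto simp: lang_def deltas_set_def)

lemma deltas_set_subset_states:
  assumes "wf_nfa A" "X \<subseteq> states A" "w \<in> lists (alphabet A)"
  shows "deltas_set A X w \<subseteq> states A"
  using assms(2,3)
proof (induction w arbitrary: X)
  case (Cons a w)
  have "(\<Union>q\<in>X. delta A q a) \<subseteq> states A"
    using Cons.prems assms(1) unfolding wf_nfa_def by fastforce
  with Cons show ?case by (simp add: deltas_set_Cons)
qed simp

definition tower_step :: "'a list set \<Rightarrow> 'a list set \<Rightarrow> 'a list \<Rightarrow> 'a list \<Rightarrow> bool" where
  "tower_step K L v w \<longleftrightarrow> prefix v w \<and> (v \<in> K \<longrightarrow> w \<in> L) \<and> (v \<in> L \<longrightarrow> w \<in> K)"

lemma tower_iff_tower_step:
  "tower K L ws \<longleftrightarrow> ws \<noteq> [] \<and> ws ! 0 \<in> K \<union> L \<and>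
     (\<forall>i. Suc i < length ws \<longrightarrow> tower_step K L (ws ! i) (ws ! Suc i))"
  by (simp add: tower_def tower_step_def)

lemma infinite_tower_iff_tower_step:
  "infinite_tower K L w \<longleftrightarrow> w 0 \<in> K \<union> L \<and> (\<forall>i. tower_step K L (w i) (w (Suc i)))"
  by (simp add: infinite_tower_def tower_step_def)

lemma tower_step_mem: "tower_step K L v w \<Longrightarrow> v \<in> K \<union> L \<Longrightarrow> w \<in> K \<union> L"
  by (auto simp: tower_step_def)

lemma tower_nth_mem:
  assumes "tower K L ws" "i < length ws"
  shows "ws ! i \<in> K \<union> L"
  using assms(2)
proof (induction i)
  case (Suc i)
  then show ?case using assms(1) tower_step_mem by (fastforce simp: tower_iff_tower_step)
qed (use assms(1) in \<open>simp add: tower_def\<close>)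

lemma tower_nth_prefix:
  assumes "tower K L ws" "i \<le> j" "j < length ws"
  shows "prefix (ws ! i) (ws ! j)"
  using assms(2,3)
proof (induction j rule: dec_induct)
  case (step j)
  then have "prefix (ws ! j) (ws ! Suc j)"
    using assms(1) by (simp add: tower_iff_tower_step tower_step_def)
  with step show ?case by (meson Suc_lessD prefix_order.trans)
qed simp

lemma infinite_tower_mem:
  assumes "infinite_tower K L w"
  shows "w k \<in> K \<union> L"
proof (induction k)
  case (Suc k)
  moreover have "tower_step K L (w k) (w (Suc k))"
    using assms by (simp add: infinite_tower_iff_tower_step)
  ultimately show ?case by (rule tower_step_mem[rotated])
qed (use assms in \<open>simp add: infinite_tower_def\<close>)

lemma disjoint_if_no_infinite_tower:
  assumes "\<nexists>w. infinite_tower K L w"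
  shows "K \<inter> L = {}"
proof (rule ccontr)
  assume "K \<inter> L \<noteq> {}"
  then obtain v where "v \<in> K" "v \<in> L" by blast
  then have "infinite_tower K L (\<lambda>_. v)" by (simp add: infinite_tower_def)
  with assms show False by blast
qed

lemma infinite_tower_alternates:
  assumes "infinite_tower K L w" "K \<inter> L = {}"
  shows "w (Suc k) \<in> K \<longleftrightarrow> w k \<notin> K"
  using assms infinite_tower_mem[OF assms(1), of k] infinite_tower_mem[OF assms(1), of "Suc k"]
  by (auto simp: infinite_tower_def)

section \<open>Pumping a repeated configuration\<close>

text \<open>If two positions \<open>i < j\<close> of a tower are indistinguishable by a right congruence \<open>c\<close>
  saturating \<open>K\<close> and \<open>L\<close>, inserting \<open>u\<close> (with \<open>ws ! j = ws ! i @ u\<close>) after \<open>ws ! i\<close> preserves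
  tower steps, so the segment from \<open>i\<close> to \<open>j\<close> can be repeated forever.\<close>

lemma infinite_tower_if_repeated_class:
  fixes c :: "'a list \<Rightarrow> 'c"
  assumes tw: "tower K L ws" and ij: "i < j" "j < length ws"
    and cong: "\<And>x y z. c x = c y \<Longrightarrow> c (x @ z) = c (y @ z)"
    and sat_K: "\<And>v w. c v = c w \<Longrightarrow> v \<in> K \<longleftrightarrow> w \<in> K"
    and sat_L: "\<And>v w. c v = c w \<Longrightarrow> v \<in> L \<longleftrightarrow> w \<in> L"
    and repeat: "c (ws ! i) = c (ws ! j)"
  shows "\<exists>w. infinite_tower K L w"
proof -
  define x where "x = ws ! i"
  define u where "u = drop (length x) (ws ! j)"
  define h where "h w = x @ u @ drop (length x) w" for w
  define p where "p = j - i"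
  define g where "g k = (h ^^ (k div p)) (ws ! (i + k mod p))" for k
  have p: "0 < p" "i + p = j" using ij by (simp_all add: p_def)
  have x_prefix: "prefix x (ws ! k)" if "i \<le> k" "k < length ws" for k
    using tower_nth_prefix[OF tw that] by (simp add: x_def)
  have h_x: "h x = ws ! j"
    using x_prefix[of j] ij by (auto simp: h_def u_def prefix_def)
  have c_h: "c (h w) = c w" if "prefix x w" for w
  proof -
    from \<open>prefix x w\<close> obtain y where w: "w = x @ y" by (auto simp: prefix_def)
    have "c (x @ u) = c x" using h_x repeat by (simp add: h_def x_def)
    then have "c ((x @ u) @ y) = c (x @ y)" by (rule cong)
    then show ?thesis by (simp add: h_def w)
  qed
  have step_h: "tower_step K L (h v) (h w)" if "prefix x v" "tower_step K L v w" for v w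
  proof -
    have "prefix x w" using that prefix_order.trans by (auto simp: tower_step_def)
    moreover have "prefix (drop (length x) v) (drop (length x) w)"
      using that(2) by (auto simp: tower_step_def prefix_def)
    ultimately show ?thesis
      using that sat_K[OF c_h] sat_L[OF c_h] by (auto simp: tower_step_def h_def)
  qed
  have step_funpow: "tower_step K L ((h ^^ q) v) ((h ^^ q) w)"
    if "prefix x v" "tower_step K L v w" for q v w
  proof (induction q)
    case (Suc q)
    have "prefix x ((h ^^ q) v)" using that(1) by (cases q) (simp_all add: h_def)
    with Suc show ?case by (simp add: step_h)
  qed (use that in simp)
  have g_Suc: "g (Suc k) = (h ^^ (k div p)) (ws ! Suc (i + k mod p))" for k
  proof (cases "Suc (k mod p) < p")
    case True
    then show ?thesis by (simp add: g_def div_Suc mod_Suc)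
  next
    case False
    then have "Suc (k mod p) = p" using p by (meson mod_less_divisor Suc_lessI)
    then have "g (Suc k) = (h ^^ (k div p)) (h (ws ! i))"
      by (simp add: g_def div_Suc mod_Suc funpow_Suc_right del: funpow.simps)
    moreover have "Suc (i + k mod p) = j" using \<open>Suc (k mod p) = p\<close> p by simp
    ultimately show ?thesis using h_x by (simp add: x_def)
  qed
  have "tower_step K L (g k) (g (Suc k))" for k
  proof -
    have "i + k mod p < j" using p mod_less_divisor[OF p(1), of k] by linarith
    then have "tower_step K L (ws ! (i + k mod p)) (ws ! Suc (i + k mod p))"
      using tw ij by (simp add: tower_iff_tower_step)
    moreover have "prefix x (ws ! (i + k mod p))" using \<open>i + k mod p < j\<close> ij x_prefix by simp
    ultimately show ?thesis unfolding g_Suc by (simp add: g_def step_funpow)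
  qed
  moreover have "g 0 \<in> K \<union> L" using tower_nth_mem[OF tw] ij by (simp add: g_def)
  ultimately show ?thesis by (auto simp: infinite_tower_iff_tower_step)
qed

section \<open>The upper bound\<close>

lemma card_le_half_if_inj_into_complement:
  assumes "finite U" "G \<subseteq> U" "inj_on f G" "f ` G \<subseteq> U - G"
  shows "2 * card G \<le> card U"
proof -
  have "card (G \<union> f ` G) = card G + card (f ` G)"
    using assms by (intro card_Un_disjoint) (auto intro: finite_subset)
  also have "card (f ` G) = card G" using assms(3) by (rule card_image)
  finally have "2 * card G = card (G \<union> f ` G)" by simp
  also have "\<dots> \<le> card U" using assms by (intro card_mono) auto
  finally show ?thesis .
qed

definition toggle :: "'x \<Rightarrow> 'x set \<Rightarrow> 'x set" where
  "toggle z X = (if z \<in> X then X - {z} else insert z X)"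

text \<open>Toggle \<open>qb \<in> FB\<close> in \<open>T\<close> when no other final state of \<open>T\<close> exists, and \<open>qa \<in> FA\<close> in \<open>S\<close>
  otherwise: an involution mapping pairs with exactly one accepting component to pairs
  where both or neither component is accepting.\<close>

lemma card_exactly_one_accepting_le:
  assumes fin: "finite QA" "finite QB" and sub: "FA \<subseteq> QA" "FB \<subseteq> QB"
    and final: "qa \<in> FA" "qb \<in> FB"
  shows "card {(S, T). S \<subseteq> QA \<and> T \<subseteq> QB \<and> (S \<inter> FA \<noteq> {}) \<noteq> (T \<inter> FB \<noteq> {})}
           \<le> 2 ^ (card QA + card QB - 1)"
proof -
  define G where "G = {(S, T). S \<subseteq> QA \<and> T \<subseteq> QB \<and> (S \<inter> FA \<noteq> {}) \<noteq> (T \<inter> FB \<noteq> {})}"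
  define U where "U = Pow QA \<times> Pow QB"
  define \<psi> where "\<psi> = (\<lambda>(S, T). if T \<inter> (FB - {qb}) = {} then (S, toggle qb T) else (toggle qa S, T))"
  have "finite U" "G \<subseteq> U" using fin by (auto simp: U_def G_def)
  moreover have "\<psi> (\<psi> z) = z" for z
    by (cases z) (auto simp: \<psi>_def toggle_def)
  then have "inj_on \<psi> G" by (metis inj_onI)
  moreover have "\<psi> z \<in> U - G" if "z \<in> G" for z
  proof -
    obtain S T where z: "z = (S, T)" "S \<subseteq> QA" "T \<subseteq> QB"
      and exactly_one: "(S \<inter> FA \<noteq> {}) \<noteq> (T \<inter> FB \<noteq> {})"
      using \<open>z \<in> G\<close> by (auto simp: G_def)
    show ?thesis
    proof (cases "T \<inter> (FB - {qb}) = {}")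
      case True
      then have "toggle qb T \<inter> FB \<noteq> {} \<longleftrightarrow> \<not> T \<inter> FB \<noteq> {}"
        using final by (auto simp: toggle_def)
      then show ?thesis using True z exactly_one sub final by (auto simp: \<psi>_def G_def U_def toggle_def)
    next
      case False
      then have "qa \<notin> S" using exactly_one final by auto
      then show ?thesis using False z exactly_one sub final by (auto simp: \<psi>_def G_def U_def toggle_def)
    qed
  qed
  then have "\<psi> ` G \<subseteq> U - G" by blast
  ultimately have "2 * card G \<le> card U" by (rule card_le_half_if_inj_into_complement)
  moreover have "card U = 2 ^ (card QA + card QB)"
    using fin by (simp add: U_def card_cartesian_product card_Pow power_add)
  moreover have "card QA \<noteq> 0" using fin sub final by auto
  moreover obtain t where "card QA + card QB = Suc t" using \<open>card QA \<noteq> 0\<close> by (cases "card QA") auto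
  ultimately show ?thesis unfolding G_def by simp
qed

lemma tower_nth_lists:
  assumes "tower (lang A) (lang B) ws" "alphabet A = alphabet B" "k < length ws"
  shows "ws ! k \<in> lists (alphabet A)"
  using tower_nth_mem[OF assms(1,3)] assms(2) by (auto simp: lang_def)

lemma infinite_tower_if_repeated_deltas_sets:
  fixes A :: "('q, 'a) nfa" and B :: "('p, 'a) nfa"
  assumes alph: "alphabet A = alphabet B" and tw: "tower (lang A) (lang B) ws"
    and ij: "i < j" "j < length ws"
    and repeat_A: "deltas_set A (init A) (ws ! i) = deltas_set A (init A) (ws ! j)"
    and repeat_B: "deltas_set B (init B) (ws ! i) = deltas_set B (init B) (ws ! j)"
  shows "\<exists>w. infinite_tower (lang A) (lang B) w"
proof -
  define c where "c w = (w \<in> lists (alphabet A), deltas_set A (init A) w, deltas_set B (init B) w)" for w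
  show ?thesis
  proof (rule infinite_tower_if_repeated_class[OF tw ij, where c = c])
    show "c (x @ z) = c (y @ z)" if "c x = c y" for x y z
      using that by (simp add: c_def deltas_set_append)
    show "v \<in> lang A \<longleftrightarrow> w \<in> lang A" "v \<in> lang B \<longleftrightarrow> w \<in> lang B" if "c v = c w" for v w
      using that alph by (simp_all add: c_def lang_iff_deltas_set)
    show "c (ws ! i) = c (ws ! j)"
      using tower_nth_lists[OF tw alph] ij repeat_A repeat_B by (simp add: c_def)
  qed
qed

theorem tower_length_le:
  fixes A :: "('q, 'a) nfa" and B :: "('p, 'a) nfa"
  assumes wf: "wf_nfa A" "wf_nfa B" and alph: "alphabet A = alphabet B"
    and no_inf: "\<nexists>w. infinite_tower (lang A) (lang B) w"
    and tw: "tower (lang A) (lang B) ws"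
  shows "length ws \<le> 2 ^ (card (states A) + card (states B) - 1)"
proof (cases "length ws = 1")
  case False
  then have "Suc 0 < length ws" using tw by (cases ws) (auto simp: tower_def)
  then have "tower_step (lang A) (lang B) (ws ! 0) (ws ! Suc 0)"
    using tw by (simp add: tower_iff_tower_step)
  moreover have "ws ! 0 \<in> lang A \<union> lang B" using tw by (simp add: tower_def)
  ultimately have "lang A \<noteq> {}" "lang B \<noteq> {}" by (auto simp: tower_step_def)
  then obtain qa qb where final: "qa \<in> final A" "qb \<in> final B"
    by (auto simp: lang_iff_deltas_set)
  define conf where "conf w = (deltas_set A (init A) w, deltas_set B (init B) w)" for w
  define G where "G = {(S, T). S \<subseteq> states A \<and> T \<subseteq> states B \<and>
      (S \<inter> final A \<noteq> {}) \<noteq> (T \<inter> final B \<noteq> {})}"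
  have distinct_conf: False if "i < j" "j < length ws" "conf (ws ! i) = conf (ws ! j)" for i j
    using infinite_tower_if_repeated_deltas_sets[OF alph tw that(1,2)] that(3) no_inf
    by (simp add: conf_def)
  have "inj_on (\<lambda>k. conf (ws ! k)) {..<length ws}"
    by (rule inj_onI, rule ccontr) (metis distinct_conf lessThan_iff linorder_neqE_nat)
  moreover have "conf (ws ! k) \<in> G" if "k < length ws" for k
  proof -
    have words: "ws ! k \<in> lists (alphabet A)" using tower_nth_lists[OF tw alph that] .
    then have "deltas_set A (init A) (ws ! k) \<subseteq> states A" "deltas_set B (init B) (ws ! k) \<subseteq> states B"
      using wf alph by (simp_all add: deltas_set_subset_states wf_nfa_def[of A] wf_nfa_def[of B])
    moreover have "ws ! k \<in> lang A \<longleftrightarrow> deltas_set A (init A) (ws ! k) \<inter> final A \<noteq> {}"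
      "ws ! k \<in> lang B \<longleftrightarrow> deltas_set B (init B) (ws ! k) \<inter> final B \<noteq> {}"
      using words alph by (simp_all add: lang_iff_deltas_set)
    moreover have "lang A \<inter> lang B = {}" using no_inf by (rule disjoint_if_no_infinite_tower)
    then have "ws ! k \<in> lang A \<longleftrightarrow> ws ! k \<notin> lang B" using tower_nth_mem[OF tw that] by blast
    ultimately show ?thesis unfolding conf_def G_def by simp
  qed
  moreover have "finite G"
    using wf by (intro finite_subset[of G "Pow (states A) \<times> Pow (states B)"]) (auto simp: G_def wf_nfa_def)
  ultimately have "length ws \<le> card G"
    using card_mono[of G "(\<lambda>k. conf (ws ! k)) ` {..<length ws}"] by (auto simp: card_image)
  also have "card G \<le> 2 ^ (card (states A) + card (states B) - 1)"
    using wf final unfolding G_def wf_nfa_def by (intro card_exactly_one_accepting_le) auto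
  finally show ?thesis .
qed simp

section \<open>A family of automata attaining the bound up to a factor of two\<close>

text \<open>A state set \<open>X\<close> of \<open>counter_nfa m\<close> encodes the number \<open>counter_value X\<close> in binary;
  reading the letter \<open>a\<close> with bit \<open>a\<close> set replaces \<open>2 ^ a\<close> by \<open>2 ^ a - 1\<close> (bits \<open>0..<a\<close>),
  so along the ruler word the counter runs down from \<open>2 ^ m - 1\<close> one step at a time.\<close>

definition counter_nfa :: "nat \<Rightarrow> (nat, nat) nfa" where
  "counter_nfa m = \<lparr>states = {0..<m}, alphabet = {0..<m}, init = {0..<m}, final = {0},
     delta = (\<lambda>q a. if q = a then {0..<a} else {q})\<rparr>"

definition last_zero_nfa :: "nat \<Rightarrow> (nat, nat) nfa" where
  "last_zero_nfa m = \<lparr>states = {0, 1}, alphabet = {0..<m}, init = {0}, final = {1},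
     delta = (\<lambda>q a. if a = 0 then {1} else {0})\<rparr>"

fun ruler :: "nat \<Rightarrow> nat list" where
  "ruler 0 = []"
| "ruler (Suc j) = ruler j @ j # ruler j"

definition counter_value :: "nat set \<Rightarrow> nat" where
  "counter_value X = (\<Sum>q\<in>X. 2 ^ q)"

lemma length_ruler: "length (ruler j) = 2 ^ j - 1"
  by (induction j) simp_all

lemma set_ruler: "set (ruler j) \<subseteq> {0..<j}"
  by (induction j) auto

lemma prefix_ruler_SucE:
  assumes "prefix p (ruler (Suc j))"
  obtains "prefix p (ruler j)" | p' where "p = ruler j @ j # p'" "prefix p' (ruler j)"
  using assms by (auto simp: prefix_append prefix_Cons)

lemma last_odd_prefix_ruler:
  assumes "prefix p (ruler j)" "odd (length p)"
  shows "last p = 0"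
  using assms
proof (induction j arbitrary: p)
  case (Suc j)
  from Suc.prems(1) show ?case
  proof (cases rule: prefix_ruler_SucE)
    case (2 p')
    show ?thesis
    proof (cases "p' = []")
      case True
      then have "odd (2 ^ j :: nat)" using 2 Suc.prems(2) by (simp add: length_ruler)
      then show ?thesis using 2 True by simp
    next
      case False
      then have "j \<noteq> 0" using 2 by (cases j) auto
      then have "odd (length p')" using 2 Suc.prems(2) by (simp add: length_ruler)
      then show ?thesis using 2 False Suc.IH by simp
    qed
  qed (use Suc in blast)
qed simp

lemma counter_nfa_step:
  "(\<Union>q\<in>X. delta (counter_nfa m) q a) = (if a \<in> X then X - {a} \<union> {0..<a} else X)"
  by (auto simp: counter_nfa_def split: if_splits)

lemma deltas_set_counter_nfa_Cons:
  "deltas_set (counter_nfa m) X (a # w) =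
     deltas_set (counter_nfa m) (if a \<in> X then X - {a} \<union> {0..<a} else X) w"
  by (simp add: deltas_set_Cons counter_nfa_step)

lemma deltas_set_counter_nfa_fire:
  assumes "j \<notin> X"
  shows "deltas_set (counter_nfa m) (insert j X) (j # w) = deltas_set (counter_nfa m) (X \<union> {0..<j}) w"
proof -
  have "insert j X - {j} \<union> {0..<j} = X \<union> {0..<j}" using assms by auto
  then show ?thesis by (simp add: deltas_set_counter_nfa_Cons)
qed

lemma deltas_set_counter_nfa_ruler:
  assumes "X \<subseteq> {j..}"
  shows "deltas_set (counter_nfa m) (X \<union> {0..<j}) (ruler j) = X"
  using assms
proof (induction j arbitrary: X)
  case (Suc j)
  have "X \<union> {0..<Suc j} = insert j X \<union> {0..<j}" by auto
  then have "deltas_set (counter_nfa m) (X \<union> {0..<Suc j}) (ruler (Suc j))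
      = deltas_set (counter_nfa m) (deltas_set (counter_nfa m) (insert j X \<union> {0..<j}) (ruler j)) (j # ruler j)"
    by (simp only: ruler.simps deltas_set_append)
  also have "\<dots> = deltas_set (counter_nfa m) (insert j X) (j # ruler j)"
    using Suc.prems by (subst Suc.IH) auto
  also have "\<dots> = deltas_set (counter_nfa m) (X \<union> {0..<j}) (ruler j)"
    using Suc.prems by (intro deltas_set_counter_nfa_fire) auto
  also have "\<dots> = X"
    using Suc.prems by (intro Suc.IH) auto
  finally show ?case .
qed simp

lemma zero_in_deltas_set_counter_nfa_even_prefix:
  assumes "X \<subseteq> {j..}" "prefix p (ruler j)" "even (length p)"
  shows "0 \<in> deltas_set (counter_nfa m) (X \<union> {0..<j}) p \<longleftrightarrow> 0 \<in> X \<union> {0..<j}"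
  using assms
proof (induction j arbitrary: X p)
  case (Suc j)
  have start: "X \<union> {0..<Suc j} = insert j X \<union> {0..<j}" by auto
  from Suc.prems(2) show ?case
  proof (cases rule: prefix_ruler_SucE)
    case 1
    moreover have "insert j X \<subseteq> {j..}" using Suc.prems by auto
    ultimately show ?thesis using Suc.IH[of "insert j X" p] Suc.prems(3) by (simp only: start)
  next
    case (2 p')
    then have "j \<noteq> 0" using Suc.prems(3) by (cases j) auto
    then have "even (length p')" using 2 Suc.prems(3) by (simp add: length_ruler)
    have "deltas_set (counter_nfa m) (X \<union> {0..<Suc j}) p
        = deltas_set (counter_nfa m) (deltas_set (counter_nfa m) (insert j X \<union> {0..<j}) (ruler j)) (j # p')"
      by (simp only: start 2 deltas_set_append)
    also have "\<dots> = deltas_set (counter_nfa m) (insert j X) (j # p')"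
      using Suc.prems by (subst deltas_set_counter_nfa_ruler) auto
    also have "\<dots> = deltas_set (counter_nfa m) (X \<union> {0..<j}) p'"
      using Suc.prems by (intro deltas_set_counter_nfa_fire) auto
    moreover have "X \<subseteq> {j..}" using Suc.prems(1) by auto
    ultimately show ?thesis
      using Suc.IH[of X p'] 2 \<open>even (length p')\<close> \<open>j \<noteq> 0\<close> by simp
  qed
qed simp

lemma counter_value_lessThan_less: "counter_value {0..<a} < 2 ^ a"
  by (induction a) (simp_all add: counter_value_def)

lemma counter_value_fire_less:
  assumes "finite X" "a \<in> X"
  shows "counter_value (X - {a} \<union> {0..<a}) < counter_value X"
proof -
  have "counter_value (X - {a} \<union> {0..<a}) \<le> counter_value (X - {a}) + counter_value {0..<a}"
    unfolding counter_value_def using assms(1) by (simp add: sum_Un_nat)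
  also have "\<dots> < counter_value (X - {a}) + 2 ^ a"
    using counter_value_lessThan_less by simp
  also have "\<dots> = counter_value X"
    unfolding counter_value_def using assms by (simp add: sum.remove)
  finally show ?thesis .
qed

lemma finite_deltas_set_counter_nfa: "finite X \<Longrightarrow> finite (deltas_set (counter_nfa m) X w)"
  by (induction w arbitrary: X) (simp_all add: deltas_set_counter_nfa_Cons)

lemma counter_value_deltas_set_counter_nfa:
  assumes "finite X"
  shows "deltas_set (counter_nfa m) X w = X \<or> counter_value (deltas_set (counter_nfa m) X w) < counter_value X"
  using assms
proof (induction w arbitrary: X)
  case (Cons a w)
  show ?case
  proof (cases "a \<in> X")
    case True
    define Y where "Y = X - {a} \<union> {0..<a}"
    have "finite Y" using Cons.prems by (simp add: Y_def)
    then have "counter_value (deltas_set (counter_nfa m) Y w) \<le> counter_value Y"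
      using Cons.IH[of Y] by (metis order.order_iff_strict)
    also have "counter_value Y < counter_value X"
      unfolding Y_def using Cons.prems True by (rule counter_value_fire_less)
    finally show ?thesis
      using True by (simp add: Y_def deltas_set_counter_nfa_Cons)
  qed (use Cons in \<open>simp add: deltas_set_counter_nfa_Cons\<close>)
qed simp

lemma lang_counter_nfa:
  "lang (counter_nfa m) = {w \<in> lists {0..<m}. 0 \<in> deltas_set (counter_nfa m) {0..<m} w}"
  by (auto simp: lang_iff_deltas_set counter_nfa_def)

lemma deltas_last_zero_nfa:
  "deltas (last_zero_nfa m) q w = (if w = [] then {q} else if last w = 0 then {1} else {0})"
  by (induction w arbitrary: q) (auto simp: last_zero_nfa_def)

lemma lang_last_zero_nfa:
  "lang (last_zero_nfa m) = {w \<in> lists {0..<m}. w \<noteq> [] \<and> last w = 0}"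
proof -
  have "deltas (last_zero_nfa m) 0 w \<inter> final (last_zero_nfa m) \<noteq> {} \<longleftrightarrow> w \<noteq> [] \<and> last w = 0" for w
    by (simp add: deltas_last_zero_nfa) (simp add: last_zero_nfa_def)
  then show ?thesis by (auto simp: lang_def last_zero_nfa_def)
qed

lemma lang_counter_nfa_disjoint: "lang (counter_nfa m) \<inter> lang (last_zero_nfa m) = {}"
proof -
  have "0 \<notin> deltas_set (counter_nfa m) X (v @ [0])" for X v
    by (simp add: deltas_set_append deltas_set_counter_nfa_Cons)
  then show ?thesis
    by (auto simp: lang_counter_nfa lang_last_zero_nfa) (metis append_butlast_last_id)
qed

lemma no_infinite_tower_counter_nfa:
  "\<nexists>w. infinite_tower (lang (counter_nfa m)) (lang (last_zero_nfa m)) w"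
proof
  assume "\<exists>w. infinite_tower (lang (counter_nfa m)) (lang (last_zero_nfa m)) w"
  then obtain f where f: "infinite_tower (lang (counter_nfa m)) (lang (last_zero_nfa m)) f" ..
  define S where "S k = deltas_set (counter_nfa m) {0..<m} (f k)" for k
  have mem_iff: "f k \<in> lang (counter_nfa m) \<longleftrightarrow> 0 \<in> S k" for k
    using infinite_tower_mem[OF f, of k]
    by (auto simp: S_def lang_counter_nfa lang_last_zero_nfa)
  have descent: "counter_value (S (Suc k)) < counter_value (S k)" for k
  proof -
    obtain v where v: "f (Suc k) = f k @ v"
      using f by (auto simp: infinite_tower_def prefix_def)
    have "S (Suc k) \<noteq> S k"
      using infinite_tower_alternates[OF f lang_counter_nfa_disjoint, of k] mem_iff by auto
    moreover have "S (Suc k) = deltas_set (counter_nfa m) (S k) v"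
      by (simp add: S_def v deltas_set_append)
    ultimately show ?thesis
      using counter_value_deltas_set_counter_nfa[of "S k" m v]
      by (simp add: S_def finite_deltas_set_counter_nfa)
  qed
  have "counter_value (S k) + k \<le> counter_value (S 0)" for k
  proof (induction k)
    case (Suc k)
    then show ?case using descent[of k] by simp
  qed simp
  from this[of "Suc (counter_value (S 0))"] show False by simp
qed

lemma tower_takes:
  assumes "K \<inter> L = {}" "0 < N" "\<And>k. k < N \<Longrightarrow> take k w \<in> (if even k then K else L)"
  shows "tower K L (map (\<lambda>k. take k w) [0..<N])"
  unfolding tower_iff_tower_step
proof (intro conjI allI impI)
  show "map (\<lambda>k. take k w) [0..<N] \<noteq> []" "map (\<lambda>k. take k w) [0..<N] ! 0 \<in> K \<union> L"
    using assms(2) assms(3)[of 0] by auto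
next
  fix i assume "Suc i < length (map (\<lambda>k. take k w) [0..<N])"
  then have i: "Suc i < N" by simp
  have "prefix (take i w) (take (Suc i) w)"
    using take_is_prefix[of i "take (Suc i) w"] by (simp add: min_def)
  moreover have "take i w \<in> K \<longrightarrow> take (Suc i) w \<in> L" "take i w \<in> L \<longrightarrow> take (Suc i) w \<in> K"
    using assms(1) assms(3)[of i] assms(3)[of "Suc i"] i by (cases "even i"; auto)+
  ultimately show "tower_step K L (map (\<lambda>k. take k w) [0..<N] ! i) (map (\<lambda>k. take k w) [0..<N] ! Suc i)"
    using i by (simp add: tower_step_def)
qed

lemma tower_counter_nfa:
  assumes "0 < m"
  shows "tower (lang (counter_nfa m)) (lang (last_zero_nfa m)) (map (\<lambda>k. take k (ruler m)) [0..<2 ^ m])"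
proof (rule tower_takes[OF lang_counter_nfa_disjoint])
  fix k :: nat assume "k < 2 ^ m"
  then have len: "length (take k (ruler m)) = k" by (simp add: length_ruler)
  have words: "take k (ruler m) \<in> lists {0..<m}"
    using set_ruler[of m] by (auto dest: in_set_takeD)
  show "take k (ruler m) \<in> (if even k then lang (counter_nfa m) else lang (last_zero_nfa m))"
  proof (cases "even k")
    case True
    then have "0 \<in> deltas_set (counter_nfa m) ({} \<union> {0..<m}) (take k (ruler m))"
      using zero_in_deltas_set_counter_nfa_even_prefix[of "{}" m "take k (ruler m)"] len assms
      by (simp add: take_is_prefix)
    then show ?thesis using True words by (simp add: lang_counter_nfa)
  next
    case False
    then have "take k (ruler m) \<noteq> [] \<and> last (take k (ruler m)) = 0"
      using last_odd_prefix_ruler[of "take k (ruler m)" m] len odd_pos[of k]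
      by (auto simp: take_is_prefix)
    then show ?thesis using False words by (simp add: lang_last_zero_nfa)
  qed
qed simp

lemma wf_counter_nfa: "0 < m \<Longrightarrow> wf_nfa (counter_nfa m)"
  by (auto simp: wf_nfa_def counter_nfa_def)

lemma wf_last_zero_nfa: "wf_nfa (last_zero_nfa m)"
  by (auto simp: wf_nfa_def last_zero_nfa_def)

lemma long_tower_counter_nfa:
  assumes "0 < m"
  shows "\<exists>(A :: (nat, nat) nfa) (B :: (nat, nat) nfa) ws.
    wf_nfa A \<and> wf_nfa B \<and> alphabet A = alphabet B \<and> card (states A) = m \<and> card (states B) = 2 \<and>
    \<not> (\<exists>w. infinite_tower (lang A) (lang B) w) \<and> tower (lang A) (lang B) ws \<and> length ws \<ge> 2 ^ m"
proof (intro exI conjI)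
  show "tower (lang (counter_nfa m)) (lang (last_zero_nfa m)) (map (\<lambda>k. take k (ruler m)) [0..<2 ^ m])"
    using assms by (rule tower_counter_nfa)
qed (use assms wf_counter_nfa wf_last_zero_nfa no_infinite_tower_counter_nfa in
      \<open>simp_all add: counter_nfa_def last_zero_nfa_def\<close>)

theorem corollary16:
  shows "(\<forall>(A :: ('q, 'a) nfa) (B :: ('p, 'a) nfa) m n ws.
            wf_nfa A \<and> wf_nfa B \<and> alphabet A = alphabet B \<and> card (states A) \<le> m \<and> card (states B) \<le> n \<and>
            \<not> (\<exists>w. infinite_tower (lang A) (lang B) w) \<and>
            tower (lang A) (lang B) ws
            \<longrightarrow> length ws \<le> 2 ^ (m + n - 1))
       \<and> infinite {(m, n). \<exists>(A :: (nat, nat) nfa) (B :: (nat, nat) nfa) ws.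
            wf_nfa A \<and> wf_nfa B \<and> alphabet A = alphabet B \<and>
            card (states A) = m \<and> card (states B) = n \<and>
            \<not> (\<exists>w. infinite_tower (lang A) (lang B) w) \<and>
            tower (lang A) (lang B) ws \<and> length ws \<ge> 2 ^ (m + n - 2)}"
proof (intro conjI allI impI)
  fix A :: "('q, 'a) nfa" and B :: "('p, 'a) nfa" and m n ws
  assume H: "wf_nfa A \<and> wf_nfa B \<and> alphabet A = alphabet B \<and> card (states A) \<le> m \<and>
    card (states B) \<le> n \<and> \<not> (\<exists>w. infinite_tower (lang A) (lang B) w) \<and> tower (lang A) (lang B) ws"
  then have "length ws \<le> 2 ^ (card (states A) + card (states B) - 1)"
    by (intro tower_length_le) auto
  also have "\<dots> \<le> 2 ^ (m + n - 1)"
    using H by (intro power_increasing) auto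
  finally show "length ws \<le> 2 ^ (m + n - 1)" .
next
  let ?pairs = "{(m, n). \<exists>(A :: (nat, nat) nfa) (B :: (nat, nat) nfa) ws.
            wf_nfa A \<and> wf_nfa B \<and> alphabet A = alphabet B \<and>
            card (states A) = m \<and> card (states B) = n \<and>
            \<not> (\<exists>w. infinite_tower (lang A) (lang B) w) \<and>
            tower (lang A) (lang B) ws \<and> length ws \<ge> 2 ^ (m + n - 2)}"
  have "(\<lambda>m. (m, 2)) ` {0<..} \<subseteq> ?pairs"
    using long_tower_counter_nfa by auto
  moreover have "infinite ((\<lambda>m. (m, 2 :: nat)) ` {0 :: nat<..})"
    by (auto simp: finite_image_iff inj_on_def infinite_Ioi)
  ultimately show "infinite ?pairs" by (rule infinite_super)
qed

end
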